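(* Let $\mathbb{X}$ be a finite set, $\mathcal{H}_A$ a finite-dimensional Hilbert space, and $\{\rho_A^x\}_{x\in\mathbb{X}}$ density operators on $\mathcal{H}_A$. Then \[ \mathcal{Q}(X\rightarrow A)_{\rho_A}\leq\mathcal{B}(X\rightarrow A)_{\rho_A}\leq\mathcal{R}(X\rightarrow A)_{\rho_A}. \]
   Context: All logarithms are base 2. $\Delta(\mathbb{X})$ is the set of probability mass functions on $\mathbb{X}$. For a density operator $\rho$ and positive semi-definite $\sigma$, $\widetilde{D}_\infty(\rho\|\sigma)=\log\big(\inf\{\mu\in\mathbb{R}:\rho\leq\mu\sigma\}\big)$ ($+\infty$ if the support of $\rho$ is not contained in that of $\sigma$). Maximal quantum leakage: $\mathcal{Q}(X\rightarrow A)_{\rho_A}=\sup_{\{F_y\}_{y\in\mathbb{Y}}}\log\big(\sum_{y\in\mathbb{Y}}\max_{x\in\mathbb{X}}\operatorname{tr}(\rho_A^xF_y)\big)$, the supremum over all POVMs on $\mathcal{H}_A$ with arbitrary finite outcome set $\mathbb{Y}$. Barycentric quantum Rényi leakage: $\mathcal{B}(X\rightarrow A)_{\rho_A}=\min_{\pi\in\Delta(\mathbb{X})}\max_{x\in\mathbb{X}}\widetilde{D}_\infty\big(\rho_A^x\,\|\,\sum_{x'}\pi(x')\rho_A^{x'}\big)$. Pairwise quantum Rényi leakage: $\mathcal{R}(X\rightarrow A)_{\rho_A}=\max_{x,x'\in\mathbb{X}}\widetilde{D}_\infty(\rho_A^x\|\rho_A^{x'})$. *)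

theory Defs
  imports "HOL-Analysis.Analysis"
begin

text \<open>Operators on a finite-dimensional Hilbert space H_A = C^'n are complex matrices
  of type complex^'n^'n (the dimension 'n is an arbitrary finite type).\<close>

definition adjoint_mat :: "complex^'n^'n \<Rightarrow> complex^'n^'n" where
  "adjoint_mat A = (\<chi> i j. cnj (A $ j $ i))"

definition hermitian_mat :: "complex^'n^'n \<Rightarrow> bool" where
  "hermitian_mat A \<longleftrightarrow> adjoint_mat A = A"

definition qform :: "complex^'n^'n \<Rightarrow> complex^'n \<Rightarrow> complex" where
  "qform A v = (\<Sum>i\<in>UNIV. cnj (v $ i) * (A *v v) $ i)"

definition psd :: "complex^'n^'n \<Rightarrow> bool" where
  "psd A \<longleftrightarrow> hermitian_mat A \<and> (\<forall>v. 0 \<le> Re (qform A v))"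

definition loewner_le :: "complex^'n^'n \<Rightarrow> complex^'n^'n \<Rightarrow> bool" where
  "loewner_le A B \<longleftrightarrow> psd (B - A)"

definition density_op :: "complex^'n^'n \<Rightarrow> bool" where
  "density_op \<rho> \<longleftrightarrow> psd \<rho> \<and> trace \<rho> = 1"

definition supp_op :: "complex^'n^'n \<Rightarrow> (complex^'n) set" where
  "supp_op A = range (\<lambda>v. A *v v)"

definition Dmax :: "complex^'n^'n \<Rightarrow> complex^'n^'n \<Rightarrow> ereal" where
  "Dmax \<rho> \<sigma> =
     (if supp_op \<rho> \<subseteq> supp_op \<sigma>
      then ereal (log 2 (Inf {\<mu>::real. loewner_le \<rho> (\<mu> *\<^sub>R \<sigma>)}))
      else \<infinity>)"

text \<open>POVMs on H_A with a finite outcome set Y (w.l.o.g. a finite set of naturals).\<close>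
definition povm :: "nat set \<Rightarrow> (nat \<Rightarrow> complex^'n^'n) \<Rightarrow> bool" where
  "povm Y F \<longleftrightarrow> finite Y \<and> (\<forall>y\<in>Y. psd (F y)) \<and> (\<Sum>y\<in>Y. F y) = mat 1"

definition max_quantum_leakage :: "'x set \<Rightarrow> ('x \<Rightarrow> complex^'n^'n) \<Rightarrow> ereal" where
  "max_quantum_leakage X \<rho> =
     (SUP YF \<in> {(Y, F). povm Y F}.
        ereal (log 2 (\<Sum>y\<in>fst YF. Max ((\<lambda>x. Re (trace (\<rho> x ** snd YF y))) ` X))))"

definition prob_dist :: "'x set \<Rightarrow> ('x \<Rightarrow> real) set" where
  "prob_dist X = {\<pi>. (\<forall>x\<in>X. 0 \<le> \<pi> x) \<and> (\<Sum>x\<in>X. \<pi> x) = 1}"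

definition barycentric_leakage :: "'x set \<Rightarrow> ('x \<Rightarrow> complex^'n^'n) \<Rightarrow> ereal" where
  "barycentric_leakage X \<rho> =
     (INF \<pi> \<in> prob_dist X. Max ((\<lambda>x. Dmax (\<rho> x) (\<Sum>x'\<in>X. \<pi> x' *\<^sub>R \<rho> x')) ` X))"

definition pairwise_leakage :: "'x set \<Rightarrow> ('x \<Rightarrow> complex^'n^'n) \<Rightarrow> ereal" where
  "pairwise_leakage X \<rho> = Max ((\<lambda>(x, x'). Dmax (\<rho> x) (\<rho> x')) ` (X \<times> X))"

end

theory Submission
  imports Defs
begin

text \<open>For a POVM \<open>{F y}\<close> and any prior \<open>\<pi>\<close> with barycentre \<open>\<sigma> = \<Sum>x. \<pi> x \<rho>\<^sub>x\<close>,
  domination \<open>\<rho>\<^sub>x \<le> \<mu>\<^sub>x \<sigma>\<close> in the Loewner order gives \<open>tr (\<rho>\<^sub>x F y) \<le> \<mu>\<^sub>x tr (\<sigma> F y)\<close>,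
  because the trace of a product of two positive semidefinite matrices is nonnegative.
  Summing the maxima over \<open>y\<close> and using \<open>\<Sum>y. tr (\<sigma> F y) = 1\<close> bounds the guessing
  probability by \<open>max\<^sub>x \<mu>\<^sub>x\<close>, i.e. its logarithm by \<open>max\<^sub>x D\<^sub>\<infinity>(\<rho>\<^sub>x \<parallel> \<sigma>)\<close>; the least such
  \<open>\<mu>\<^sub>x\<close> exists whenever \<open>supp \<rho>\<^sub>x \<subseteq> supp \<sigma>\<close>, by a compactness argument on the
  orthogonal complement of \<open>ker \<sigma>\<close>. The nonnegativity of \<open>tr (P Q)\<close> is proved by induction on
  the dimension via Schur complements. The barycentric leakage is at most the pairwise one
  because the point masses are among the priors.\<close>

section \<open>Positive semidefinite kernels on finite index sets\<close>

definition qform_on :: "'a set \<Rightarrow> ('a \<Rightarrow> 'a \<Rightarrow> complex) \<Rightarrow> ('a \<Rightarrow> complex) \<Rightarrow> complex" where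
  "qform_on I P v = (\<Sum>i\<in>I. \<Sum>j\<in>I. cnj (v i) * P i j * v j)"

definition psd_on :: "'a set \<Rightarrow> ('a \<Rightarrow> 'a \<Rightarrow> complex) \<Rightarrow> bool" where
  "psd_on I P \<longleftrightarrow> (\<forall>i\<in>I. \<forall>j\<in>I. P j i = cnj (P i j)) \<and> (\<forall>v. 0 \<le> Re (qform_on I P v))"

lemma psd_on_hermitian: "psd_on I P \<Longrightarrow> i \<in> I \<Longrightarrow> j \<in> I \<Longrightarrow> P j i = cnj (P i j)"
  unfolding psd_on_def by blast

lemma psd_on_qform_on_nonneg: "psd_on I P \<Longrightarrow> 0 \<le> Re (qform_on I P v)"
  unfolding psd_on_def by blast

lemma qform_on_insert:
  assumes "finite I" "k \<notin> I"
  shows "qform_on (insert k I) P v = cnj (v k) * P k k * v k + cnj (v k) * (\<Sum>j\<in>I. P k j * v j)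
           + (\<Sum>i\<in>I. cnj (v i) * P i k) * v k + qform_on I P v"
  using assms by (simp add: qform_on_def sum.distrib sum_distrib_left sum_distrib_right mult.assoc)

lemma qform_on_indicator:
  assumes "finite I" "i \<in> I"
  shows "qform_on I P (\<lambda>j. if j = i then 1 else 0) = P i i"
proof -
  have "qform_on I P (\<lambda>j. if j = i then 1 else 0)
      = (\<Sum>i'\<in>I. if i' = i then (\<Sum>j\<in>I. if j = i then P i j else 0) else 0)"
    unfolding qform_on_def by (intro sum.cong) (auto intro!: sum.cong)
  then show ?thesis using assms by simp
qed

lemma psd_on_diag:
  assumes "psd_on I P" "finite I" "i \<in> I"
  shows "P i i = of_real (Re (P i i))" "0 \<le> Re (P i i)"
proof -
  have "P i i = cnj (P i i)" using psd_on_hermitian[OF assms(1,3,3)] .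
  then show "P i i = of_real (Re (P i i))" by (metis Reals_cnj_iff of_real_Re)
  show "0 \<le> Re (P i i)"
    using psd_on_qform_on_nonneg[OF assms(1)] qform_on_indicator[OF assms(2,3)] by metis
qed

lemma psd_on_subset:
  assumes "psd_on J P" "I \<subseteq> J" "finite J"
  shows "psd_on I P"
  unfolding psd_on_def
proof (intro conjI ballI allI)
  fix i j assume "i \<in> I" "j \<in> I"
  then show "P j i = cnj (P i j)" using assms(2) by (intro psd_on_hermitian[OF assms(1)]) auto
next
  fix v :: "'a \<Rightarrow> complex"
  define v' where "v' i = (if i \<in> I then v i else 0)" for i
  have "qform_on I P v = qform_on J P v'"
    unfolding qform_on_def
  proof (rule sum.mono_neutral_cong_left[OF assms(3,2)])
    fix i assume "i \<in> I"
    then show "(\<Sum>j\<in>I. cnj (v i) * P i j * v j) = (\<Sum>j\<in>J. cnj (v' i) * P i j * v' j)"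
      by (intro sum.mono_neutral_cong_left[OF assms(3,2)]) (auto simp: v'_def)
  qed (simp add: v'_def)
  then show "0 \<le> Re (qform_on I P v)" using psd_on_qform_on_nonneg[OF assms(1)] by simp
qed

lemma psd_on_add_diag:
  assumes "psd_on I P" "finite I" "0 \<le> e"
  shows "psd_on I (\<lambda>i j. P i j + (if i = j then of_real e else 0))"
  unfolding psd_on_def
proof (intro conjI ballI allI)
  fix i j assume "i \<in> I" "j \<in> I"
  then show "P j i + (if j = i then of_real e else 0) = cnj (P i j + (if i = j then of_real e else 0))"
    using psd_on_hermitian[OF assms(1), of i j] by simp
next
  fix v :: "'a \<Rightarrow> complex"
  have "cnj (v i) * (P i j + (if i = j then of_real e else 0)) * v j
      = cnj (v i) * P i j * v j + (if j = i then of_real e * (v i * cnj (v i)) else 0)" for i j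
    by (simp add: algebra_simps)
  then have "qform_on I (\<lambda>i j. P i j + (if i = j then of_real e else 0)) v
      = qform_on I P v + (\<Sum>i\<in>I. of_real e * (v i * cnj (v i)))"
    using assms(2) by (simp add: qform_on_def sum.distrib sum.delta)
  moreover have "0 \<le> Re (\<Sum>i\<in>I. of_real e * (v i * cnj (v i)))"
    using assms(3) by (simp add: Re_sum complex_mult_cnj sum_nonneg)
  ultimately show "0 \<le> Re (qform_on I (\<lambda>i j. P i j + (if i = j then of_real e else 0)) v)"
    using psd_on_qform_on_nonneg[OF assms(1)] by simp
qed

lemma psd_on_schur_complement:
  assumes fin: "finite I" and k: "k \<notin> I" and P: "psd_on (insert k I) P"
    and a: "P k k = of_real a" "a > 0"
  shows "psd_on I (\<lambda>i j. P i j - P i k * P k j / of_real a)"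
  unfolding psd_on_def
proof (intro conjI ballI allI)
  fix i j assume "i \<in> I" "j \<in> I"
  then show "P j i - P j k * P k i / of_real a = cnj (P i j - P i k * P k j / of_real a)"
    using psd_on_hermitian[OF P, of i j] psd_on_hermitian[OF P, of i k]
      psd_on_hermitian[OF P, of k j] by simp
next
  fix v :: "'a \<Rightarrow> complex"
  define b where "b = (\<Sum>j\<in>I. P k j * v j)"
  have col: "(\<Sum>i\<in>I. cnj (v i) * P i k) = cnj b"
    unfolding b_def cnj_sum using psd_on_hermitian[OF P, of k] by (intro sum.cong) auto
  have "qform_on I (\<lambda>i j. P i j - P i k * P k j / of_real a) v
      = qform_on I P v - (\<Sum>i\<in>I. cnj (v i) * P i k) * (\<Sum>j\<in>I. P k j * v j) / of_real a"
    by (simp add: qform_on_def sum_subtractf sum_distrib_left sum_distrib_right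
        sum_divide_distrib algebra_simps)
  also have "\<dots> = qform_on I P v - cnj b * b / of_real a"
    by (simp add: col b_def)
  also have "\<dots> = qform_on (insert k I) P (v(k := - b / of_real a))"
  proof -
    define w where "w = v(k := - b / of_real a)"
    have w: "w i = v i" if "i \<in> I" for i using k that by (auto simp: w_def)
    have "(\<Sum>j\<in>I. P k j * w j) = b" "(\<Sum>i\<in>I. cnj (w i) * P i k) = cnj b"
      using w col by (simp_all add: b_def)
    moreover have "qform_on I P w = qform_on I P v"
      using w by (simp add: qform_on_def)
    ultimately have "qform_on (insert k I) P w
        = cnj (w k) * P k k * w k + cnj (w k) * b + cnj b * w k + qform_on I P v"
      unfolding qform_on_insert[OF fin k] by simp
    also have "\<dots> = qform_on I P v - cnj b * b / of_real a"
      using a by (simp add: w_def field_simps)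
    finally show ?thesis by (simp add: w_def)
  qed
  finally show "0 \<le> Re (qform_on I (\<lambda>i j. P i j - P i k * P k j / of_real a) v)"
    using psd_on_qform_on_nonneg[OF P] by simp
qed

text \<open>With \<open>x\<close> the \<open>k\<close>-th column of \<open>P\<close>, \<open>P = S + x x\<^sup>* / a\<close>, where the Schur complement \<open>S\<close>
  vanishes in row and column \<open>k\<close>.\<close>

lemma trace_pairing_schur_split:
  assumes fin: "finite I" and k: "k \<notin> I" and P: "psd_on (insert k I) P"
    and a: "P k k = of_real a" "a \<noteq> 0"
  shows "(\<Sum>i\<in>insert k I. \<Sum>j\<in>insert k I. P i j * Q j i)
    = (\<Sum>i\<in>I. \<Sum>j\<in>I. (P i j - P i k * P k j / of_real a) * Q j i)
      + qform_on (insert k I) Q (\<lambda>i. P i k) / of_real a"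
proof -
  define S where "S i j = P i j - P i k * P k j / of_real a" for i j
  have "(\<Sum>i\<in>insert k I. \<Sum>j\<in>insert k I. P i j * Q j i)
      = (\<Sum>i\<in>insert k I. \<Sum>j\<in>insert k I. S i j * Q j i)
        + (\<Sum>i\<in>insert k I. \<Sum>j\<in>insert k I. P i k * P k j * Q j i / of_real a)"
    by (simp add: S_def sum.distrib[symmetric] algebra_simps)
  also have "(\<Sum>i\<in>insert k I. \<Sum>j\<in>insert k I. S i j * Q j i) = (\<Sum>i\<in>I. \<Sum>j\<in>I. S i j * Q j i)"
    using fin k a by (simp add: S_def)
  also have "(\<Sum>i\<in>insert k I. \<Sum>j\<in>insert k I. P i k * P k j * Q j i / of_real a)
      = qform_on (insert k I) Q (\<lambda>i. P i k) / of_real a"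
    unfolding qform_on_def sum_divide_distrib
    by (subst sum.swap) (auto intro!: sum.cong simp: psd_on_hermitian[OF P, of _ k] mult_ac)
  finally show ?thesis unfolding S_def .
qed

lemma psd_on_trace_pairing_insert_nonneg:
  assumes fin: "finite I" and k: "k \<notin> I"
    and P: "psd_on (insert k I) P" and Q: "psd_on (insert k I) Q"
    and a: "P k k = of_real a" "a > 0"
    and IH: "\<And>S. psd_on I S \<Longrightarrow> 0 \<le> Re (\<Sum>i\<in>I. \<Sum>j\<in>I. S i j * Q j i)"
  shows "0 \<le> Re (\<Sum>i\<in>insert k I. \<Sum>j\<in>insert k I. P i j * Q j i)"
proof -
  have "0 \<le> Re (\<Sum>i\<in>I. \<Sum>j\<in>I. (P i j - P i k * P k j / of_real a) * Q j i)"
    by (intro IH psd_on_schur_complement[OF fin k P a])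
  moreover have "0 \<le> Re (qform_on (insert k I) Q (\<lambda>i. P i k) / of_real a)"
    using psd_on_qform_on_nonneg[OF Q] a(2) by (simp add: Re_divide_of_real)
  moreover have "(\<Sum>i\<in>insert k I. \<Sum>j\<in>insert k I. P i j * Q j i)
      = (\<Sum>i\<in>I. \<Sum>j\<in>I. (P i j - P i k * P k j / of_real a) * Q j i)
        + qform_on (insert k I) Q (\<lambda>i. P i k) / of_real a"
    using a by (intro trace_pairing_schur_split[OF fin k P a(1)]) simp
  ultimately show ?thesis by simp
qed

lemma psd_on_trace_pairing_nonneg:
  assumes "finite I" "psd_on I P" "psd_on I Q"
  shows "0 \<le> Re (\<Sum>i\<in>I. \<Sum>j\<in>I. P i j * Q j i)"
  using assms
proof (induction I arbitrary: P Q rule: finite_induct)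
  case empty
  then show ?case by simp
next
  case (insert k I)
  let ?J = "insert k I"
  have fin: "finite ?J" using insert.hyps by simp
  have IH: "0 \<le> Re (\<Sum>i\<in>I. \<Sum>j\<in>I. S i j * Q j i)" if "psd_on I S" for S
    using insert.IH[OF that] psd_on_subset[OF insert.prems(2) _ fin] by blast
  define c where "c = Re (\<Sum>i\<in>?J. \<Sum>j\<in>?J. P i j * Q j i)"
  define d where "d = Re (\<Sum>i\<in>?J. Q i i)"
  \<comment> \<open>The pivot \<open>P k k\<close> may vanish; adding \<open>e\<close> to the diagonal makes it positive, and \<open>e \<rightarrow> 0\<close> afterwards.\<close>
  have regularized: "0 \<le> c + e * d" if "e > 0" for e
  proof -
    define P' where "P' i j = P i j + (if i = j then of_real e else 0)" for i j
    have "psd_on ?J P'"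
      unfolding P'_def using psd_on_add_diag[OF insert.prems(1) fin] that by simp
    moreover have "P' k k = of_real (Re (P k k) + e)" "Re (P k k) + e > 0"
      using psd_on_diag[OF insert.prems(1) fin, of k] that by (simp_all add: P'_def)
    ultimately have "0 \<le> Re (\<Sum>i\<in>?J. \<Sum>j\<in>?J. P' i j * Q j i)"
      using psd_on_trace_pairing_insert_nonneg[OF insert.hyps _ insert.prems(2) _ _ IH] by blast
    moreover have "P' i j * Q j i = P i j * Q j i + (if j = i then of_real e * Q i i else 0)" for i j
      by (simp add: P'_def algebra_simps)
    then have "(\<Sum>i\<in>?J. \<Sum>j\<in>?J. P' i j * Q j i)
        = (\<Sum>i\<in>?J. \<Sum>j\<in>?J. P i j * Q j i) + of_real e * (\<Sum>i\<in>?J. Q i i)"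
      using fin by (simp add: sum.distrib sum_distrib_left sum.delta)
    ultimately show ?thesis by (simp add: c_def d_def Re_sum)
  qed
  have "((\<lambda>e. c + e * d) \<longlongrightarrow> c + 0 * d) (at_right 0)"
    by (intro tendsto_intros)
  moreover have "\<forall>\<^sub>F e in at_right 0. 0 \<le> c + e * d"
    using eventually_at_right_less by (rule eventually_mono) (rule regularized)
  ultimately have "0 \<le> c" using tendsto_lowerbound by force
  then show ?case by (simp add: c_def)
qed

section \<open>Quadratic forms and traces of complex matrices\<close>

lemma hermitian_mat_entry: "hermitian_mat A \<Longrightarrow> A $ j $ i = cnj (A $ i $ j)"
  unfolding hermitian_mat_def adjoint_mat_def by (metis vec_lambda_beta)

lemma vector_scaleR_component_complex: "(c *\<^sub>R v) $ i = of_real c * (v $ i :: complex)"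
  by (simp only: vector_scaleR_component) (simp add: scaleR_conv_of_real)

lemma matrix_vector_mult_scaleR_complex: "A *v (c *\<^sub>R x) = c *\<^sub>R (A *v x :: complex^'n)"
  by (simp add: vec_eq_iff matrix_vector_mult_def scaleR_sum_right)

lemma adjoint_mat_add: "adjoint_mat (A + B) = adjoint_mat A + adjoint_mat B"
  and adjoint_mat_diff: "adjoint_mat (A - B) = adjoint_mat A - adjoint_mat B"
  and adjoint_mat_scaleR: "adjoint_mat (c *\<^sub>R A) = c *\<^sub>R adjoint_mat A"
  and adjoint_mat_zero: "adjoint_mat 0 = 0"
  by (simp_all add: adjoint_mat_def vec_eq_iff vector_scaleR_component_complex)

lemma hermitian_mat_scaleR_diff:
  assumes "hermitian_mat A" "hermitian_mat B"
  shows "hermitian_mat (c *\<^sub>R A - B)"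
  using assms unfolding hermitian_mat_def by (simp add: adjoint_mat_diff adjoint_mat_scaleR)

definition sesq_form :: "complex^'n^'n \<Rightarrow> complex^'n \<Rightarrow> complex^'n \<Rightarrow> complex" where
  "sesq_form A u w = (\<Sum>i\<in>UNIV. \<Sum>j\<in>UNIV. cnj (u $ i) * A $ i $ j * w $ j)"

lemma sesq_form_matrix_vector_mult: "sesq_form A u w = (\<Sum>i\<in>UNIV. cnj (u $ i) * (A *v w) $ i)"
  unfolding sesq_form_def matrix_vector_mult_def by (simp add: sum_distrib_left mult.assoc)

lemma qform_eq_sesq_form: "qform A v = sesq_form A v v"
  unfolding qform_def sesq_form_matrix_vector_mult ..

lemma qform_eq_qform_on: "qform A v = qform_on UNIV (\<lambda>i j. A $ i $ j) (\<lambda>i. v $ i)"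
  unfolding qform_def qform_on_def matrix_vector_mult_def
  by (simp add: sum_distrib_left mult.assoc)

lemma sesq_form_add_left: "sesq_form A (u + u') w = sesq_form A u w + sesq_form A u' w"
  and sesq_form_add_right: "sesq_form A u (w + w') = sesq_form A u w + sesq_form A u w'"
  unfolding sesq_form_def by (simp_all add: algebra_simps sum.distrib)

lemma sesq_form_scaleR_left: "sesq_form A (c *\<^sub>R u) w = of_real c * sesq_form A u w"
  and sesq_form_scaleR_right: "sesq_form A u (c *\<^sub>R w) = of_real c * sesq_form A u w"
  unfolding sesq_form_def vector_scaleR_component_complex by (simp_all add: sum_distrib_left mult_ac)

lemma sesq_form_hermitian:
  assumes "hermitian_mat A"
  shows "sesq_form A u w = cnj (sesq_form A w u)"
proof -
  have "cnj (A $ i $ j) = A $ j $ i" for i j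
    using hermitian_mat_entry[OF assms, of j i] by simp
  then have "cnj (sesq_form A w u) = (\<Sum>i\<in>UNIV. \<Sum>j\<in>UNIV. cnj (u $ j) * A $ j $ i * w $ i)"
    unfolding sesq_form_def cnj_sum by (simp add: mult_ac)
  also have "\<dots> = sesq_form A u w"
    unfolding sesq_form_def by (rule sum.swap)
  finally show ?thesis by simp
qed

lemma sesq_form_kernel_right: "A *v w = 0 \<Longrightarrow> sesq_form A u w = 0"
  unfolding sesq_form_matrix_vector_mult by simp

lemma sesq_form_kernel_left: "hermitian_mat A \<Longrightarrow> A *v u = 0 \<Longrightarrow> sesq_form A u w = 0"
  using sesq_form_hermitian sesq_form_kernel_right by (metis complex_cnj_zero)

lemma qform_add_kernel:
  assumes "hermitian_mat A" "A *v k = 0"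
  shows "qform A (k + w) = qform A w"
  using sesq_form_kernel_left[OF assms] sesq_form_kernel_right[OF assms(2)]
  unfolding qform_eq_sesq_form sesq_form_add_left sesq_form_add_right by simp

lemma qform_scaleR_vector: "qform A (c *\<^sub>R v) = of_real (c\<^sup>2) * qform A v"
  unfolding qform_eq_sesq_form sesq_form_scaleR_left sesq_form_scaleR_right
  by (simp add: power2_eq_square)

lemma qform_sgn: "qform A v = of_real ((norm v)\<^sup>2) * qform A (sgn v)"
proof -
  have "norm v *\<^sub>R sgn v = v" by (cases "v = 0") (simp_all add: sgn_div_norm)
  then show ?thesis by (metis qform_scaleR_vector)
qed

lemma Re_qform_sgn: "Re (qform A v) = (norm v)\<^sup>2 * Re (qform A (sgn v))"
  by (subst qform_sgn) simp

lemma qform_add_matrix: "qform (A + B) v = qform A v + qform B v"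
  unfolding qform_eq_sesq_form sesq_form_def by (simp add: algebra_simps sum.distrib)

lemma qform_diff_matrix: "qform (A - B) v = qform A v - qform B v"
  unfolding qform_eq_sesq_form sesq_form_def by (simp add: algebra_simps sum_subtractf)

lemma qform_scaleR_matrix: "qform (c *\<^sub>R A) v = of_real c * qform A v"
  unfolding qform_eq_sesq_form sesq_form_def vector_scaleR_component
  by (simp add: scaleR_conv_of_real sum_distrib_left mult_ac)

lemma continuous_on_Re_qform: "continuous_on S (\<lambda>v. Re (qform A v))"
  unfolding qform_eq_sesq_form sesq_form_def by (intro continuous_intros)

lemma psd_imp_psd_on:
  assumes "psd A"
  shows "psd_on UNIV (\<lambda>i j. A $ i $ j)"
  unfolding psd_on_def
proof (intro conjI ballI allI)
  fix i j show "A $ j $ i = cnj (A $ i $ j)"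
    using assms unfolding psd_def by (blast intro: hermitian_mat_entry)
next
  fix v :: "'a \<Rightarrow> complex"
  have "qform_on UNIV (\<lambda>i j. A $ i $ j) v = qform A (\<chi> i. v i)"
    by (simp add: qform_eq_qform_on)
  then show "0 \<le> Re (qform_on UNIV (\<lambda>i j. A $ i $ j) v)"
    using assms unfolding psd_def by simp
qed

lemma psd_zero: "psd 0"
  unfolding psd_def hermitian_mat_def by (simp add: adjoint_mat_zero qform_def)

lemma psd_add: "psd A \<Longrightarrow> psd B \<Longrightarrow> psd (A + B)"
  unfolding psd_def hermitian_mat_def
  by (simp add: adjoint_mat_add qform_add_matrix add_nonneg_nonneg)

lemma psd_scaleR: "0 \<le> c \<Longrightarrow> psd A \<Longrightarrow> psd (c *\<^sub>R A)"
  unfolding psd_def hermitian_mat_def by (simp add: adjoint_mat_scaleR qform_scaleR_matrix)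

lemma psd_sum_scaleR:
  "(\<And>x. x \<in> S \<Longrightarrow> psd (A x)) \<Longrightarrow> (\<And>x. x \<in> S \<Longrightarrow> 0 \<le> p x) \<Longrightarrow> psd (\<Sum>x\<in>S. p x *\<^sub>R A x)"
  by (induction S rule: infinite_finite_induct) (simp_all add: psd_zero psd_add psd_scaleR)

lemma trace_matrix_mult: "trace (A ** B) = (\<Sum>i\<in>UNIV. \<Sum>j\<in>UNIV. A $ i $ j * B $ j $ i)"
  unfolding trace_def matrix_matrix_mult_def by simp

lemma trace_mult_psd_nonneg:
  fixes A B :: "complex^'n^'n"
  shows "psd A \<Longrightarrow> psd B \<Longrightarrow> 0 \<le> Re (trace (A ** B))"
  unfolding trace_matrix_mult by (intro psd_on_trace_pairing_nonneg psd_imp_psd_on) simp_all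

lemma trace_add_mult: "trace ((A + B) ** F) = trace (A ** F) + trace (B ** (F :: complex^'n^'n))"
  unfolding trace_matrix_mult by (simp add: distrib_right sum.distrib)

lemma trace_mult_sum_left:
  "trace ((\<Sum>x\<in>S. A x) ** F) = (\<Sum>x\<in>S. trace (A x ** (F :: complex^'n^'n)))"
  by (induction S rule: infinite_finite_induct) (simp_all add: trace_add_mult trace_0[unfolded mat_0])

lemma trace_mult_sum_right:
  "trace (A ** (\<Sum>y\<in>Y. F y)) = (\<Sum>y\<in>Y. trace (A ** (F y :: complex^'n^'n)))"
  by (simp add: trace_mul_sym[of A] trace_mult_sum_left)

lemma trace_scaleR_mult: "trace ((c *\<^sub>R A) ** F) = of_real c * trace (A ** (F :: complex^'n^'n))"
  unfolding trace_matrix_mult vector_scaleR_component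
  by (simp add: scaleR_conv_of_real sum_distrib_left mult.assoc)

lemma trace_diff_mult: "trace ((A - B) ** F) = trace (A ** F) - trace (B ** (F :: complex^'n^'n))"
  unfolding trace_matrix_mult by (simp add: left_diff_distrib sum_subtractf)

lemma trace_scaleR: "trace (c *\<^sub>R A) = of_real c * trace (A :: complex^'n^'n)"
  using trace_scaleR_mult[of c A "mat 1"] by simp

lemma trace_sum: "trace (\<Sum>x\<in>S. A x) = (\<Sum>x\<in>S. trace (A x :: complex^'n^'n))"
  using trace_mult_sum_left[of A S "mat 1"] by simp

lemma density_op_sum_scaleR:
  assumes "\<And>x. x \<in> X \<Longrightarrow> density_op (\<rho> x)" "\<pi> \<in> prob_dist X"
  shows "density_op (\<Sum>x\<in>X. \<pi> x *\<^sub>R \<rho> x)"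
proof -
  have "psd (\<Sum>x\<in>X. \<pi> x *\<^sub>R \<rho> x)"
    using assms by (intro psd_sum_scaleR) (auto simp: density_op_def prob_dist_def)
  moreover have "trace (\<Sum>x\<in>X. \<pi> x *\<^sub>R \<rho> x) = of_real (\<Sum>x\<in>X. \<pi> x)"
    using assms(1) by (simp add: trace_sum trace_scaleR density_op_def)
  ultimately show ?thesis using assms(2) by (simp add: density_op_def prob_dist_def flip: of_real_sum)
qed

lemma povm_trace_sum: "povm Y F \<Longrightarrow> (\<Sum>y\<in>Y. trace (A ** F y)) = trace (A :: complex^'n^'n)"
  unfolding povm_def by (simp flip: trace_mult_sum_right)

section \<open>Loewner domination under support inclusion\<close>

lemma linear_plus_quadratic_nonneg_imp_zero:
  fixes c q :: real
  assumes nonneg: "\<And>t. 0 \<le> 2 * t * c + t\<^sup>2 * q" and "0 \<le> q"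
  shows "c = 0"
proof (rule ccontr)
  assume "c \<noteq> 0"
  define t where "t = - c / (q + 1)"
  have q1: "0 < q + 1" using \<open>0 \<le> q\<close> by simp
  then have tq: "t * (q + 1) = - c" by (simp add: t_def)
  have "2 * t * c + t\<^sup>2 * q \<le> 2 * t * c + t\<^sup>2 * (q + 1)"
    by (simp add: distrib_left)
  also have "\<dots> = t * c"
    using tq by (simp add: power2_eq_square algebra_simps)
  also have "\<dots> = - (c\<^sup>2 / (q + 1))"
    by (simp add: t_def power2_eq_square)
  also have "\<dots> < 0"
    using q1 \<open>c \<noteq> 0\<close> by simp
  finally show False using nonneg[of t] by simp
qed

lemma psd_qform_eq_0_imp_kernel:
  assumes A: "psd A" and v: "Re (qform A v) = 0"
  shows "A *v v = 0"
proof -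
  define u where "u = A *v v"
  have herm: "hermitian_mat A" using A unfolding psd_def by simp
  have "Re (qform A (v + t *\<^sub>R u)) = 2 * t * Re (sesq_form A u v) + t\<^sup>2 * Re (qform A u)" for t
    using v sesq_form_hermitian[OF herm, of v u]
    unfolding qform_eq_sesq_form sesq_form_add_left sesq_form_add_right
      sesq_form_scaleR_left sesq_form_scaleR_right
    by (simp add: power2_eq_square algebra_simps)
  moreover have "0 \<le> Re (qform A w)" for w using A unfolding psd_def by blast
  ultimately have "Re (sesq_form A u v) = 0"
    by (intro linear_plus_quadratic_nonneg_imp_zero[where q = "Re (qform A u)"]) metis+
  moreover have "Re (sesq_form A u v) = (\<Sum>i\<in>UNIV. (Re (u $ i))\<^sup>2 + (Im (u $ i))\<^sup>2)"
    unfolding sesq_form_matrix_vector_mult u_def[symmetric] by (simp add: Re_sum power2_eq_square)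
  ultimately have "(\<Sum>i\<in>UNIV. (Re (u $ i))\<^sup>2 + (Im (u $ i))\<^sup>2) = 0"
    by simp
  then have "\<forall>i\<in>UNIV. (Re (u $ i))\<^sup>2 + (Im (u $ i))\<^sup>2 = 0"
    by (subst (asm) sum_nonneg_eq_0_iff) auto
  then show ?thesis unfolding u_def[symmetric] by (simp add: vec_eq_iff complex_eq_iff)
qed

lemma supp_op_subset_imp_kernel:
  assumes "psd \<rho>" "hermitian_mat \<sigma>" "supp_op \<rho> \<subseteq> supp_op \<sigma>" "\<sigma> *v k = 0"
  shows "\<rho> *v k = 0"
proof -
  obtain u where u: "\<rho> *v k = \<sigma> *v u" using assms(3) unfolding supp_op_def by blast
  have "qform \<rho> k = sesq_form \<sigma> k u"
    unfolding qform_def sesq_form_matrix_vector_mult u ..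
  also have "\<dots> = 0" by (rule sesq_form_kernel_left[OF assms(2,4)])
  finally show ?thesis using psd_qform_eq_0_imp_kernel[OF assms(1)] by simp
qed

lemma qform_upper_bound:
  obtains C where "0 \<le> C" "\<And>v. Re (qform A v) \<le> C * (norm v)\<^sup>2"
proof -
  obtain w where w: "\<And>v. v \<in> sphere 0 1 \<Longrightarrow> Re (qform A v) \<le> Re (qform A w)"
    using continuous_attains_sup[OF compact_sphere _ continuous_on_Re_qform]
    by (metis sphere_eq_empty zero_less_one not_less_iff_gr_or_eq)
  have "Re (qform A v) \<le> max (Re (qform A w)) 0 * (norm v)\<^sup>2" for v
  proof (cases "v = 0")
    case False
    then have "Re (qform A (sgn v)) \<le> max (Re (qform A w)) 0"
      using w[of "sgn v"] by (simp add: norm_sgn)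
    then show ?thesis
      unfolding Re_qform_sgn[of A v] by (metis mult.commute mult_right_mono zero_le_power2)
  qed (simp add: qform_def)
  then show thesis by (intro that[of "max (Re (qform A w)) 0"]) auto
qed

lemma psd_qform_coercive_on_kernel_orthogonal:
  assumes "psd \<sigma>"
  obtains m where "0 < m"
    "\<And>z. (\<And>k. \<sigma> *v k = 0 \<Longrightarrow> orthogonal z k) \<Longrightarrow> m * (norm z)\<^sup>2 \<le> Re (qform \<sigma> z)"
proof -
  define W where "W = sphere 0 1 \<inter> (\<Inter>k\<in>{k. \<sigma> *v k = 0}. {z. orthogonal z k})"
  have "compact W"
    unfolding W_def orthogonal_def
    by (intro compact_Int_closed compact_sphere closed_INT ballI) (simp add: inner_commute closed_hyperplane)
  have sgn_W: "sgn z \<in> W" if "z \<noteq> 0" "\<And>k. \<sigma> *v k = 0 \<Longrightarrow> orthogonal z k" for z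
    using that by (auto simp: W_def norm_sgn sgn_div_norm orthogonal_def)
  show thesis
  proof (cases "W = {}")
    case True
    show thesis
    proof (rule that[of 1])
      fix z assume "\<And>k. \<sigma> *v k = 0 \<Longrightarrow> orthogonal z k"
      then have "z = 0" using sgn_W True by blast
      then show "1 * (norm z)\<^sup>2 \<le> Re (qform \<sigma> z)" by (simp add: qform_def)
    qed simp
  next
    case False
    obtain w where w: "w \<in> W" "\<And>z. z \<in> W \<Longrightarrow> Re (qform \<sigma> w) \<le> Re (qform \<sigma> z)"
      using continuous_attains_inf[OF \<open>compact W\<close> False continuous_on_Re_qform] by blast
    have "\<sigma> *v w \<noteq> 0"
      using w(1) unfolding W_def by (auto simp: orthogonal_def)
    then have pos: "0 < Re (qform \<sigma> w)"
      using psd_qform_eq_0_imp_kernel[OF assms] assms unfolding psd_def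
      by (metis order_less_le)
    show thesis
    proof (rule that[OF pos])
      fix z assume orth: "\<And>k. \<sigma> *v k = 0 \<Longrightarrow> orthogonal z k"
      show "Re (qform \<sigma> w) * (norm z)\<^sup>2 \<le> Re (qform \<sigma> z)"
      proof (cases "z = 0")
        case False
        then show ?thesis
          using w(2)[OF sgn_W[OF False orth]] unfolding Re_qform_sgn[of \<sigma> z]
          by (simp add: mult_left_mono mult.commute)
      qed (simp add: qform_def)
    qed
  qed
qed

lemma loewner_le_scaleR_of_qform_le:
  assumes "hermitian_mat \<rho>" "hermitian_mat \<sigma>" "\<And>v. Re (qform \<rho> v) \<le> \<mu> * Re (qform \<sigma> v)"
  shows "loewner_le \<rho> (\<mu> *\<^sub>R \<sigma>)"
  using assms unfolding loewner_le_def psd_def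
  by (simp add: hermitian_mat_scaleR_diff qform_diff_matrix qform_scaleR_matrix)

lemma loewner_le_scaleR_exists:
  assumes \<rho>: "psd \<rho>" and \<sigma>: "psd \<sigma>" and supp: "supp_op \<rho> \<subseteq> supp_op \<sigma>"
  shows "\<exists>\<mu>. loewner_le \<rho> (\<mu> *\<^sub>R \<sigma>)"
proof -
  have herm: "hermitian_mat \<rho>" "hermitian_mat \<sigma>" using \<rho> \<sigma> unfolding psd_def by auto
  obtain m where m: "0 < m"
    "\<And>z. (\<And>k. \<sigma> *v k = 0 \<Longrightarrow> orthogonal z k) \<Longrightarrow> m * (norm z)\<^sup>2 \<le> Re (qform \<sigma> z)"
    using psd_qform_coercive_on_kernel_orthogonal[OF \<sigma>] by blast
  obtain C where C: "0 \<le> C" "\<And>z. Re (qform \<rho> z) \<le> C * (norm z)\<^sup>2"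
    using qform_upper_bound by blast
  define K where "K = {k. \<sigma> *v k = 0}"
  have "subspace K"
    unfolding K_def
    by (rule subspaceI) (auto simp: matrix_vector_right_distrib matrix_vector_mult_scaleR_complex)
  then have span_K: "span K = K" by (simp add: span_eq_iff)
  have "Re (qform \<rho> v) \<le> C / m * Re (qform \<sigma> v)" for v
  proof -
    obtain y z where y: "y \<in> K" and z: "\<And>k. k \<in> K \<Longrightarrow> orthogonal z k" and v: "v = y + z"
      using orthogonal_subspace_decomp_exists[of K v] unfolding span_K by blast
    have "\<sigma> *v y = 0" using y by (simp add: K_def)
    then have "qform \<rho> v = qform \<rho> z" "qform \<sigma> v = qform \<sigma> z"
      unfolding v using qform_add_kernel herm supp_op_subset_imp_kernel[OF \<rho> herm(2) supp]
      by blast+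
    moreover have "m * (norm z)\<^sup>2 \<le> Re (qform \<sigma> z)"
      using z by (intro m(2)) (simp add: K_def)
    then have "C * (norm z)\<^sup>2 \<le> C / m * Re (qform \<sigma> z)"
      using m(1) C(1) by (simp add: field_simps mult_left_mono)
    ultimately show ?thesis using C(2)[of z] by simp
  qed
  then show ?thesis using loewner_le_scaleR_of_qform_le[OF herm] by blast
qed

lemma trace_mult_le_of_loewner_le:
  assumes "loewner_le \<rho> (\<mu> *\<^sub>R \<sigma>)" "psd F"
  shows "Re (trace (\<rho> ** F)) \<le> \<mu> * Re (trace (\<sigma> ** F))"
  using trace_mult_psd_nonneg[OF assms(1)[unfolded loewner_le_def] assms(2)]
  by (simp add: trace_diff_mult trace_scaleR_mult)

lemma trace_mult_le_Inf_loewner: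
  assumes \<sigma>: "psd \<sigma>" and F: "psd F" and bounded: "\<exists>\<mu>. loewner_le \<rho> (\<mu> *\<^sub>R \<sigma>)"
  shows "Re (trace (\<rho> ** F)) \<le> Inf {\<mu>. loewner_le \<rho> (\<mu> *\<^sub>R \<sigma>)} * Re (trace (\<sigma> ** F))"
proof (cases "Re (trace (\<sigma> ** F)) = 0")
  case True
  then show ?thesis using bounded trace_mult_le_of_loewner_le[OF _ F] by fastforce
next
  case False
  then have pos: "0 < Re (trace (\<sigma> ** F))"
    using trace_mult_psd_nonneg[OF \<sigma> F] by simp
  have "Re (trace (\<rho> ** F)) / Re (trace (\<sigma> ** F)) \<le> Inf {\<mu>. loewner_le \<rho> (\<mu> *\<^sub>R \<sigma>)}"
    using bounded trace_mult_le_of_loewner_le[OF _ F] pos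
    by (intro cInf_greatest) (auto simp: divide_le_eq)
  then show ?thesis using pos by (simp add: divide_le_eq)
qed

section \<open>Leakage bounds\<close>

lemma povm_sum_Max_trace_ge_1:
  assumes "finite X" "x0 \<in> X" "density_op (\<rho> x0)" "povm Y F"
  shows "1 \<le> (\<Sum>y\<in>Y. Max ((\<lambda>x. Re (trace (\<rho> x ** F y))) ` X))"
proof -
  have "1 = (\<Sum>y\<in>Y. Re (trace (\<rho> x0 ** F y)))"
    using assms(3,4) by (simp add: povm_trace_sum density_op_def flip: Re_sum)
  also have "\<dots> \<le> (\<Sum>y\<in>Y. Max ((\<lambda>x. Re (trace (\<rho> x ** F y))) ` X))"
    using assms(1,2) by (intro sum_mono Max_ge) auto
  finally show ?thesis .
qed

lemma povm_sum_Max_trace_le_Max_Inf_loewner: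
  assumes X: "finite X" "X \<noteq> {}" and \<sigma>: "density_op \<sigma>" and F: "povm Y F"
    and bounded: "\<And>x. x \<in> X \<Longrightarrow> \<exists>\<mu>. loewner_le (\<rho> x) (\<mu> *\<^sub>R \<sigma>)"
  shows "(\<Sum>y\<in>Y. Max ((\<lambda>x. Re (trace (\<rho> x ** F y))) ` X))
    \<le> Max ((\<lambda>x. Inf {\<mu>. loewner_le (\<rho> x) (\<mu> *\<^sub>R \<sigma>)}) ` X)"
    (is "_ \<le> ?M")
proof -
  have psd_F: "\<And>y. y \<in> Y \<Longrightarrow> psd (F y)" using F unfolding povm_def by blast
  have psd_\<sigma>: "psd \<sigma>" using \<sigma> unfolding density_op_def by blast
  have "Re (trace (\<rho> x ** F y)) \<le> ?M * Re (trace (\<sigma> ** F y))" if "x \<in> X" "y \<in> Y" for x y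
  proof -
    have "Re (trace (\<rho> x ** F y))
        \<le> Inf {\<mu>. loewner_le (\<rho> x) (\<mu> *\<^sub>R \<sigma>)} * Re (trace (\<sigma> ** F y))"
      using that by (intro trace_mult_le_Inf_loewner psd_\<sigma> psd_F bounded)
    also have "\<dots> \<le> ?M * Re (trace (\<sigma> ** F y))"
      using that X trace_mult_psd_nonneg[OF psd_\<sigma> psd_F] by (intro mult_right_mono) auto
    finally show ?thesis .
  qed
  then have "(\<Sum>y\<in>Y. Max ((\<lambda>x. Re (trace (\<rho> x ** F y))) ` X)) \<le> (\<Sum>y\<in>Y. ?M * Re (trace (\<sigma> ** F y)))"
    using X by (intro sum_mono Max.boundedI) auto
  also have "\<dots> = ?M"
    using \<sigma> F by (simp add: povm_trace_sum density_op_def flip: sum_distrib_left Re_sum)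
  finally show ?thesis .
qed

lemma povm_log_guessing_le_Max_Dmax:
  assumes X: "finite X" "X \<noteq> {}" and \<rho>: "\<And>x. x \<in> X \<Longrightarrow> density_op (\<rho> x)"
    and \<sigma>: "density_op \<sigma>" and F: "povm Y F"
  shows "ereal (log 2 (\<Sum>y\<in>Y. Max ((\<lambda>x. Re (trace (\<rho> x ** F y))) ` X)))
    \<le> Max ((\<lambda>x. Dmax (\<rho> x) \<sigma>) ` X)"
proof (cases "\<forall>x\<in>X. supp_op (\<rho> x) \<subseteq> supp_op \<sigma>")
  case False
  then obtain x where "x \<in> X" "\<not> supp_op (\<rho> x) \<subseteq> supp_op \<sigma>" by blast
  then have "x \<in> X" "Dmax (\<rho> x) \<sigma> = \<infinity>" unfolding Dmax_def by auto
  then have "\<infinity> \<le> Max ((\<lambda>x. Dmax (\<rho> x) \<sigma>) ` X)" using X by (metis Max_ge finite_imageI imageI)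
  then show ?thesis by simp
next
  case True
  define m where "m x = Inf {\<mu>. loewner_le (\<rho> x) (\<mu> *\<^sub>R \<sigma>)}" for x
  have bounded: "\<exists>\<mu>. loewner_le (\<rho> x) (\<mu> *\<^sub>R \<sigma>)" if "x \<in> X" for x
    using that True \<rho> \<sigma> by (intro loewner_le_scaleR_exists) (auto simp: density_op_def)
  have "Max (m ` X) \<in> m ` X" using X by (intro Max_in) auto
  then obtain x where x: "x \<in> X" "m x = Max (m ` X)" by (metis imageE)
  define L where "L = (\<Sum>y\<in>Y. Max ((\<lambda>x. Re (trace (\<rho> x ** F y))) ` X))"
  have "1 \<le> L"
    unfolding L_def using X(1) x(1) \<rho>[OF x(1)] F by (rule povm_sum_Max_trace_ge_1)
  moreover have "L \<le> Max (m ` X)"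
    unfolding L_def m_def by (rule povm_sum_Max_trace_le_Max_Inf_loewner[OF X \<sigma> F]) (rule bounded)
  ultimately have "ereal (log 2 L) \<le> ereal (log 2 (m x))" using x(2) by simp
  also have "ereal (log 2 (m x)) = Dmax (\<rho> x) \<sigma>"
    using True x(1) by (simp add: Dmax_def m_def)
  also have "\<dots> \<le> Max ((\<lambda>x. Dmax (\<rho> x) \<sigma>) ` X)"
    using X x(1) by simp
  finally show ?thesis unfolding L_def .
qed

lemma max_quantum_leakage_le_barycentric_leakage:
  fixes \<rho> :: "'x \<Rightarrow> complex^'n^'n"
  assumes "finite X" "X \<noteq> {}" "\<And>x. x \<in> X \<Longrightarrow> density_op (\<rho> x)"
  shows "max_quantum_leakage X \<rho> \<le> barycentric_leakage X \<rho>"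
  unfolding max_quantum_leakage_def barycentric_leakage_def
proof (intro INF_greatest SUP_least)
  fix \<pi> and YF :: "nat set \<times> (nat \<Rightarrow> complex^'n^'n)"
  assume \<pi>: "\<pi> \<in> prob_dist X" and "YF \<in> {(Y, F). povm Y F}"
  then obtain Y F where YF: "YF = (Y, F)" "povm Y F" by blast
  have "density_op (\<Sum>x\<in>X. \<pi> x *\<^sub>R \<rho> x)"
    using assms(3) \<pi> by (rule density_op_sum_scaleR)
  then show "ereal (log 2 (\<Sum>y\<in>fst YF. Max ((\<lambda>x. Re (trace (\<rho> x ** snd YF y))) ` X)))
      \<le> Max ((\<lambda>x. Dmax (\<rho> x) (\<Sum>x'\<in>X. \<pi> x' *\<^sub>R \<rho> x')) ` X)"
    unfolding YF(1) fst_conv snd_conv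
    by (intro povm_log_guessing_le_Max_Dmax[of X \<rho>] assms YF(2)) auto
qed

lemma barycentric_leakage_le_pairwise_leakage:
  assumes "finite X" "x0 \<in> X"
  shows "barycentric_leakage X \<rho> \<le> pairwise_leakage X \<rho>"
proof -
  define \<delta> where "\<delta> x = (if x = x0 then 1 else 0 :: real)" for x
  have \<delta>: "\<delta> \<in> prob_dist X"
    using assms by (simp add: prob_dist_def \<delta>_def)
  have "(\<Sum>x\<in>X. \<delta> x *\<^sub>R \<rho> x) = (\<Sum>x\<in>X. if x = x0 then \<rho> x else 0)"
    by (intro sum.cong) (auto simp: \<delta>_def)
  also have "\<dots> = \<rho> x0"
    using assms by simp
  finally have barycentre: "(\<Sum>x\<in>X. \<delta> x *\<^sub>R \<rho> x) = \<rho> x0" .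
  have "barycentric_leakage X \<rho> \<le> Max ((\<lambda>x. Dmax (\<rho> x) (\<Sum>x'\<in>X. \<delta> x' *\<^sub>R \<rho> x')) ` X)"
    unfolding barycentric_leakage_def by (rule INF_lower[OF \<delta>])
  also have "\<dots> = Max ((\<lambda>x. Dmax (\<rho> x) (\<rho> x0)) ` X)"
    unfolding barycentre ..
  also have "\<dots> \<le> pairwise_leakage X \<rho>"
  proof -
    have "(\<lambda>x. Dmax (\<rho> x) (\<rho> x0)) ` X = (\<lambda>(x, x'). Dmax (\<rho> x) (\<rho> x')) ` (X \<times> {x0})"
      by auto
    then show ?thesis
      unfolding pairwise_leakage_def using assms by (intro Max_mono) auto
  qed
  finally show ?thesis .
qed

theorem corollary2:
  fixes X :: "'x set" and \<rho> :: "'x \<Rightarrow> complex^'n^'n"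
  assumes "finite X" and "X \<noteq> {}"
    and "\<And>x. x \<in> X \<Longrightarrow> density_op (\<rho> x)"
  shows "max_quantum_leakage X \<rho> \<le> barycentric_leakage X \<rho>
       \<and> barycentric_leakage X \<rho> \<le> pairwise_leakage X \<rho>"
proof
  show "max_quantum_leakage X \<rho> \<le> barycentric_leakage X \<rho>"
    using assms by (rule max_quantum_leakage_le_barycentric_leakage)
  obtain x0 where "x0 \<in> X" using assms(2) by blast
  with assms(1) show "barycentric_leakage X \<rho> \<le> pairwise_leakage X \<rho>"
    by (rule barycentric_leakage_le_pairwise_leakage)
qed

end
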